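(* For any semistandard cylindric tableau $R$ with outer shape $\lambda$ and any set $S$ of boxes satisfying the input conditions of full multi-insertion, the new set $N(R,S)$ forms a horizontal strip.
   Context: Fix integers $n>k\ge1$. A cylindric partition is a weakly decreasing integer sequence $(\lambda_m)_{m\in\mathbb Z}$ with $\lambda_m=\lambda_{m+k}+n-k$. A point $(x,y)\in\mathbb Z^2$ lies in $\lambda$ if $y\le\lambda_x$. Boxes are classes of points modulo translation by multiples of $(-k,n-k)$; row $x$ is the image of plane row $x$ (indexed mod $k$), column $y$ the image of plane column $y$ (indexed mod $n-k$); within a row boxes are ordered left to right by $y$-coordinates of representatives in a fixed plane row. $\mu\subseteq\lambda$ means $\mu_m\le\lambda_m$ for all $m$; boxes of $\lambda/\mu$ are those in $\lambda$ not in $\mu$. A set of boxes forms a horizontal strip if it is the set of boxes of $\lambda'/\mu'$ for some cylindric partitions $\mu'\subseteq\lambda'$ such that no two of these boxes lie in the same column. A (semistandard cylindric) tableau of shape $\lambda/\mu$ is a map from the boxes of $\lambda/\mu$ to a totally ordered alphabet, weakly increasing along plane rows and strictly increasing down plane columns; its shapes are part of its data. Full multi-insertion $\operatorname{FullMulti}(R,S)$: input a tableau $R$ with outer shape $\lambda$, inner shape $\mu$, and a set $S$ of boxes not in $\mu$ forming a horizontal strip such that $\mu$ plus $S$ is a cylindric partition. Choose an integer $r_0$. For $h=r_0,\dots,r_0+k-1$, go through the boxes of $S$ in row $h$ from left to right: if the box is in $\lambda$, remove its entry $x$ and append $(x,h+1)$ to a queue; otherwise add the box to $\lambda$. All boxes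 of $S$ are added to the inner shape. Then, while the current queue $q$ is nonempty: start an empty queue $q'$; remove pairs $(x,s)$ from the front of $q$ one at a time; if $x$ is $\ge$ every entry in row $s$, put $x$ into the leftmost box of row $s$ not in the current outer shape and add it to the outer shape; otherwise replace the leftmost entry $x'$ of row $s$ greater than $x$ by $x$ and append $(x',s+1)$ to $q'$; when $q$ is exhausted set $q:=q'$. The output $\operatorname{FullMulti}(R,S)$ is the resulting tableau, with outer shape $\lambda'$; the new set $N(R,S)$ is the set of boxes of $\lambda'/\lambda$. *)

theory Defs
  imports Main
begin

text \<open>A box is the class of a point modulo
  translation by multiples of (-k, n-k); we represent each box by its canonical
  representative, the unique point of the class lying in plane rows 0..k-1.\<close>

definition cyl_partition :: "int \<Rightarrow> int \<Rightarrow> (int \<Rightarrow> int) \<Rightarrow> bool" where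
  "cyl_partition n k lam \<longleftrightarrow>
     (\<forall>m. lam (m + 1) \<le> lam m) \<and> (\<forall>m. lam m = lam (m + k) + (n - k))"

definition in_shape :: "(int \<Rightarrow> int) \<Rightarrow> int \<times> int \<Rightarrow> bool" where
  "in_shape lam p \<longleftrightarrow> snd p \<le> lam (fst p)"

definition canon :: "int \<Rightarrow> int \<Rightarrow> int \<times> int \<Rightarrow> int \<times> int" where
  "canon n k p = (fst p mod k, snd p + (fst p div k) * (n - k))"

definition skew_boxes :: "int \<Rightarrow> (int \<Rightarrow> int) \<Rightarrow> (int \<Rightarrow> int) \<Rightarrow> (int \<times> int) set" where
  "skew_boxes k mu lam = {(x, y). 0 \<le> x \<and> x < k \<and> mu x < y \<and> y \<le> lam x}"

definition box_column :: "int \<Rightarrow> int \<Rightarrow> int \<times> int \<Rightarrow> int" where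
  "box_column n k b = snd b mod (n - k)"

definition horizontal_strip :: "int \<Rightarrow> int \<Rightarrow> (int \<times> int) set \<Rightarrow> bool" where
  "horizontal_strip n k B \<longleftrightarrow>
     (\<exists>mu' lam'. cyl_partition n k mu' \<and> cyl_partition n k lam' \<and> (\<forall>m. mu' m \<le> lam' m)
                 \<and> B = skew_boxes k mu' lam') \<and>
     (\<forall>b1\<in>B. \<forall>b2\<in>B. b1 \<noteq> b2 \<longrightarrow> box_column n k b1 \<noteq> box_column n k b2)"

text \<open>A tableau is a triple (mu, lam, E): inner shape, outer shape, and entries
  E assigned to boxes (canonical representatives); the entry of a plane point p
  is E (canon n k p).  Only the values on boxes of lam/mu are meaningful.\<close>

type_synonym 'a tableau = "(int \<Rightarrow> int) \<times> (int \<Rightarrow> int) \<times> (int \<times> int \<Rightarrow> 'a)"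

definition in_skew :: "(int \<Rightarrow> int) \<Rightarrow> (int \<Rightarrow> int) \<Rightarrow> int \<times> int \<Rightarrow> bool" where
  "in_skew mu lam p \<longleftrightarrow> in_shape lam p \<and> \<not> in_shape mu p"

definition is_tableau :: "int \<Rightarrow> int \<Rightarrow> ('a::linorder) tableau \<Rightarrow> bool" where
  "is_tableau n k R \<longleftrightarrow> (case R of (mu, lam, E) \<Rightarrow>
     cyl_partition n k mu \<and> cyl_partition n k lam \<and> (\<forall>m. mu m \<le> lam m) \<and>
     (\<forall>x y. in_skew mu lam (x, y) \<and> in_skew mu lam (x, y + 1) \<longrightarrow>
            E (canon n k (x, y)) \<le> E (canon n k (x, y + 1))) \<and>
     (\<forall>x y. in_skew mu lam (x, y) \<and> in_skew mu lam (x + 1, y) \<longrightarrow>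
            E (canon n k (x, y)) < E (canon n k (x + 1, y))))"

definition adds_to :: "int \<Rightarrow> int \<Rightarrow> (int \<Rightarrow> int) \<Rightarrow> (int \<times> int) set \<Rightarrow> (int \<Rightarrow> int) \<Rightarrow> bool" where
  "adds_to n k mu S nu \<longleftrightarrow> cyl_partition n k nu \<and>
     (\<forall>p. in_shape nu p \<longleftrightarrow> in_shape mu p \<or> canon n k p \<in> S)"

definition fm_input :: "int \<Rightarrow> int \<Rightarrow> ('a::linorder) tableau \<Rightarrow> (int \<times> int) set \<Rightarrow> bool" where
  "fm_input n k R S \<longleftrightarrow> (case R of (mu, lam, E) \<Rightarrow>
     (\<forall>p. canon n k p \<in> S \<longrightarrow> \<not> in_shape mu p) \<and>
     horizontal_strip n k S \<and> (\<exists>nu. adds_to n k mu S nu))"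

text \<open>State of the algorithm: (inner shape, outer shape, entries, current queue q, next queue q').\<close>
type_synonym 'a fm_state =
  "(int \<Rightarrow> int) \<times> (int \<Rightarrow> int) \<times> (int \<times> int \<Rightarrow> 'a) \<times> ('a \<times> int) list \<times> ('a \<times> int) list"

definition fm_process ::
  "int \<Rightarrow> int \<Rightarrow> (int \<Rightarrow> int) \<Rightarrow> (int \<Rightarrow> int) \<Rightarrow> (int \<times> int \<Rightarrow> 'a::linorder) \<Rightarrow> 'a \<Rightarrow> int
   \<Rightarrow> (int \<Rightarrow> int) \<times> (int \<times> int \<Rightarrow> 'a) \<times> ('a \<times> int) list" where
  "fm_process n k mu lam E x s =
     (if (\<forall>y. mu s < y \<and> y \<le> lam s \<longrightarrow> E (canon n k (s, y)) \<le> x)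
      then ((\<lambda>m. if m mod k = s mod k then lam m + 1 else lam m),
            E(canon n k (s, lam s + 1) := x), [])
      else (let y0 = (LEAST y. mu s < y \<and> y \<le> lam s \<and> x < E (canon n k (s, y)))
            in (lam, E(canon n k (s, y0) := x), [(E (canon n k (s, y0)), s + 1)])))"

definition fm_step :: "int \<Rightarrow> int \<Rightarrow> ('a::linorder) fm_state \<Rightarrow> 'a fm_state" where
  "fm_step n k st = (case st of (mu, lam, E, q, q') \<Rightarrow>
     (case q of
        [] \<Rightarrow> (mu, lam, E, q', [])
      | (x, s) # rest \<Rightarrow>
          (case fm_process n k mu lam E x s of (lam2, E2, new) \<Rightarrow>
             (mu, lam2, E2, rest, q' @ new))))"

definition fm_init :: "int \<Rightarrow> int \<Rightarrow> ('a::linorder) tableau \<Rightarrow> (int \<times> int) set \<Rightarrow> int \<Rightarrow> 'a fm_state" where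
  "fm_init n k R S r0 = (case R of (mu, lam, E) \<Rightarrow>
     (let nu = (THE nu. adds_to n k mu S nu);
          q0 = concat (map (\<lambda>h. map (\<lambda>y. (E (canon n k (h, y)), h + 1))
                                     (sorted_list_of_set {y. canon n k (h, y) \<in> S \<and> y \<le> lam h}))
                           [r0..r0 + k - 1])
      in (nu, (\<lambda>m. max (lam m) (nu m)), E, q0, [])))"

definition fm_final :: "int \<Rightarrow> int \<Rightarrow> ('a::linorder) tableau \<Rightarrow> (int \<times> int) set \<Rightarrow> int \<Rightarrow> 'a fm_state \<Rightarrow> bool" where
  "fm_final n k R S r0 F \<longleftrightarrow>
     (\<exists>i. F = (fm_step n k ^^ i) (fm_init n k R S r0)
          \<and> (\<forall>j<i. case (fm_step n k ^^ j) (fm_init n k R S r0) of (_, _, _, q, q') \<Rightarrow> \<not> (q = [] \<and> q' = []))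
          \<and> (case F of (_, _, _, q, q') \<Rightarrow> q = [] \<and> q' = []))"

definition fm_new_set :: "int \<Rightarrow> ('a::linorder) tableau \<Rightarrow> 'a fm_state \<Rightarrow> (int \<times> int) set" where
  "fm_new_set k R F = skew_boxes k (fst (snd R)) (fst (snd F))"

end

theory Submission
  imports Defs
begin

(* Write nu for mu plus S. The inner shape stays nu throughout, and it suffices to show that the
   final outer shape lambda' satisfies lambda <= lambda' and lambda'(m+1) <= lambda(m), since then
   lambda'/lambda meets every plane column at most once. A box is added to row s only when the
   value x bumped from column c of row s-1 is at least every entry of row s, and it is added right
   after the current end of row s; as c <= lambda(s-1), one has to show that this end lies left of c.
   This follows from an invariant built on a frontier F: beyond F(m), row m still carries the
   entries of R; every pending value x comes from an original position c with F(s) < c <= F(s-1)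
   and dominates the entries of row s up to F(s); and the queue is ordered by column. If row s
   reached column c, column strictness of R would put an entry larger than x at position c. *)

section \<open>Periodic functions and canonical representatives\<close>

lemma periodic_shift:
  fixes f :: "int \<Rightarrow> int"
  assumes "\<And>m. f (m + k) = f m - d"
  shows "f (m + t * k) = f m - t * d"
proof (induction t rule: int_induct[where k = 0])
  case (step1 i)
  have "f (m + (i + 1) * k) = f ((m + i * k) + k)" by (simp add: algebra_simps)
  then show ?case using step1 assms[of "m + i * k"] by (simp add: algebra_simps)
next
  case (step2 i)
  have "f (m + i * k) = f ((m + (i - 1) * k) + k)" by (simp add: algebra_simps)
  then show ?case using step2 assms[of "m + (i - 1) * k"] by (simp add: algebra_simps)
qed simp

lemma antitone_int:
  fixes f :: "int \<Rightarrow> int"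
  assumes "\<And>m. f (m + 1) \<le> f m" and "a \<le> b"
  shows "f b \<le> f a"
  using assms(2)
proof (induction b rule: int_ge_induct)
  case (step i)
  then show ?case using assms(1)[of i] by linarith
qed simp

lemma cyl_partition_shift: "cyl_partition n k f \<Longrightarrow> f (m + t * k) = f m - t * (n - k)"
  by (rule periodic_shift) (simp add: cyl_partition_def algebra_simps)

lemma mod_eq_ex_mult:
  fixes k :: int
  assumes "m mod k = s mod k"
  obtains t where "m = s + t * k"
proof -
  have "k dvd m - s" using assms mod_eq_dvd_iff by blast
  then obtain t where "m - s = k * t" by (auto simp: dvd_def)
  then show ?thesis using that[of t] by (simp add: algebra_simps)
qed

lemma int_Least_bounded_below:
  fixes P :: "int \<Rightarrow> bool"
  assumes "P y" and bound: "\<And>z. P z \<Longrightarrow> a \<le> z"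
  shows "P (LEAST z. P z)" and "P z \<Longrightarrow> (LEAST z. P z) \<le> z"
proof -
  define M where "M = Min {z. P z \<and> z \<le> y}"
  have fin: "finite {z. P z \<and> z \<le> y}"
    by (rule finite_subset[of _ "{a..y}"]) (auto dest: bound)
  have "M \<in> {z. P z \<and> z \<le> y}" unfolding M_def using fin assms(1) by (intro Min_in) auto
  moreover have M_le: "M \<le> z" if "P z" for z
  proof (cases "z \<le> y")
    case True
    then show ?thesis unfolding M_def using fin that by (intro Min_le) auto
  next
    case False
    then show ?thesis using \<open>M \<in> {z. P z \<and> z \<le> y}\<close> by simp
  qed
  ultimately have "(LEAST z. P z) = M" by (intro Least_equality) auto
  then show "P (LEAST z. P z)" and "P z \<Longrightarrow> (LEAST z. P z) \<le> z"
    using \<open>M \<in> {z. P z \<and> z \<le> y}\<close> M_le by auto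
qed

lemma canon_shift: "k \<noteq> 0 \<Longrightarrow> canon n k (m + t * k, y) = canon n k (m, y + t * (n - k))"
  unfolding canon_def by (simp add: algebra_simps)

lemma canon_same_row_eq_iff: "canon n k (m, y) = canon n k (m, y') \<longleftrightarrow> y = y'"
  unfolding canon_def by simp

lemma canon_same_column_eq_iff:
  assumes "n \<noteq> k"
  shows "canon n k (m, y) = canon n k (m', y) \<longleftrightarrow> m = m'"
proof
  assume "canon n k (m, y) = canon n k (m', y)"
  then have "m mod k = m' mod k" "m div k = m' div k" using assms unfolding canon_def by auto
  then show "m = m'" by (metis div_mult_mod_eq)
qed simp

lemma canon_other_row: "m mod k \<noteq> s mod k \<Longrightarrow> canon n k (m, y) \<noteq> canon n k (s, y')"
  unfolding canon_def by simp

definition entry :: "int \<Rightarrow> int \<Rightarrow> (int \<times> int \<Rightarrow> 'a) \<Rightarrow> int \<Rightarrow> int \<Rightarrow> 'a" where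
  "entry n k E m y = E (canon n k (m, y))"

lemma entry_shift: "k \<noteq> 0 \<Longrightarrow> entry n k E (s + t * k) y = entry n k E s (y + t * (n - k))"
  unfolding entry_def using canon_shift by metis

lemma entry_upd_same_row:
  "entry n k (E(canon n k (s, p) := v)) s y = (if y = p then v else entry n k E s y)"
  unfolding entry_def using canon_same_row_eq_iff by auto

lemma entry_upd_other_row:
  "m mod k \<noteq> s mod k \<Longrightarrow> entry n k (E(canon n k (s, p) := v)) m y = entry n k E m y"
  unfolding entry_def using canon_other_row by auto

section \<open>Horizontal strips between two cylindric partitions\<close>

lemma strip_row_unique:
  fixes lam W :: "int \<Rightarrow> int"
  assumes W_anti: "\<And>m. W (m + 1) \<le> W m" and W_lam: "\<And>m. W (m + 1) \<le> lam m"
    and "lam x < y" "y \<le> W x" "lam r < y" "y \<le> W r"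
  shows "x = r"
proof (rule ccontr)
  have no_later: "lam a < y \<Longrightarrow> y \<le> W b \<Longrightarrow> \<not> a < b" for a b
    using antitone_int[of W "a + 1" b] W_anti W_lam[of a] by force
  assume "x \<noteq> r"
  then show False using no_later assms(3-6) by (meson linorder_neqE)
qed

lemma horizontal_strip_skew_boxes:
  fixes lam W :: "int \<Rightarrow> int"
  assumes "1 \<le> k" and cl: "cyl_partition n k lam" and cW: "cyl_partition n k W"
    and "\<forall>m. lam m \<le> W m" and W_lam: "\<forall>m. W (m + 1) \<le> lam m"
  shows "horizontal_strip n k (skew_boxes k lam W)"
  unfolding horizontal_strip_def
proof (intro conjI ballI impI)
  show "\<exists>mu' lam'. cyl_partition n k mu' \<and> cyl_partition n k lam' \<and> (\<forall>m. mu' m \<le> lam' m)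
         \<and> skew_boxes k lam W = skew_boxes k mu' lam'"
    using assms by blast
next
  fix b1 b2 assume b1: "b1 \<in> skew_boxes k lam W" and b2: "b2 \<in> skew_boxes k lam W"
    and ne: "b1 \<noteq> b2"
  obtain x1 y1 x2 y2 where b: "b1 = (x1, y1)" "b2 = (x2, y2)" by fastforce
  have h: "0 \<le> x1" "x1 < k" "lam x1 < y1" "y1 \<le> W x1" "0 \<le> x2" "x2 < k" "lam x2 < y2" "y2 \<le> W x2"
    using b1 b2 b unfolding skew_boxes_def by auto
  show "box_column n k b1 \<noteq> box_column n k b2"
  proof
    assume "box_column n k b1 = box_column n k b2"
    then have "y2 mod (n - k) = y1 mod (n - k)" using b unfolding box_column_def by simp
    then obtain t where t: "y2 = y1 + t * (n - k)" by (rule mod_eq_ex_mult)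
    \<comment> \<open>the point (x1, y1) and the translate of (x2, y2) lie in the same plane column\<close>
    have "lam (x2 + t * k) < y1" "y1 \<le> W (x2 + t * k)"
      using h t cyl_partition_shift[OF cl] cyl_partition_shift[OF cW] by auto
    then have "x1 = x2 + t * k"
      using strip_row_unique[of W lam] h W_lam cW unfolding cyl_partition_def by blast
    with h have "t * k < 1 * k" "(- 1) * k < t * k" by linarith+
    then have "t = 0" using mult_right_less_imp_less h by fastforce
    then show False using ne b t \<open>x1 = x2 + t * k\<close> by simp
  qed
qed

lemma adds_to_unique:
  assumes "adds_to n k mu S nu" and "adds_to n k mu S nu'"
  shows "nu' = nu"
proof
  fix m
  have "y \<le> nu m \<longleftrightarrow> y \<le> nu' m" for y
    using assms unfolding adds_to_def in_shape_def by (metis fst_conv snd_conv)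
  then show "nu' m = nu m" by (meson order_antisym order_refl)
qed

lemma adds_to_boxes:
  assumes "\<forall>p. canon n k p \<in> S \<longrightarrow> \<not> in_shape mu p" and "adds_to n k mu S nu"
  shows "canon n k (h, y) \<in> S \<longleftrightarrow> mu h < y \<and> y \<le> nu h"
  using assms unfolding adds_to_def in_shape_def by (metis fst_conv not_le snd_conv)

lemma adds_to_le:
  assumes "adds_to n k mu S nu"
  shows "mu m \<le> nu m"
  using assms unfolding adds_to_def in_shape_def by (metis fst_conv order_refl snd_conv)

lemma horizontal_strip_adds_to:
  assumes "k < n" and strip: "horizontal_strip n k S"
    and cmu: "cyl_partition n k mu" and cnu: "cyl_partition n k nu"
    and S_boxes: "\<And>h y. canon n k (h, y) \<in> S \<longleftrightarrow> mu h < y \<and> y \<le> nu h"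
  shows "nu (m + 1) \<le> mu m"
proof (rule ccontr)
  assume "\<not> nu (m + 1) \<le> mu m"
  moreover have "mu (m + 1) \<le> mu m" "nu (m + 1) \<le> nu m"
    using cmu cnu unfolding cyl_partition_def by blast+
  ultimately have "canon n k (m, nu (m + 1)) \<in> S" "canon n k (m + 1, nu (m + 1)) \<in> S"
    using S_boxes by auto
  moreover have "canon n k (m, nu (m + 1)) \<noteq> canon n k (m + 1, nu (m + 1))"
    using canon_same_column_eq_iff[of n k] assms(1) by simp
  moreover have "box_column n k (canon n k (m, y)) = box_column n k (canon n k (m + 1, y))" for y
    unfolding box_column_def canon_def by simp
  ultimately show False using strip unfolding horizontal_strip_def by blast
qed

section \<open>The invariant of full multi-insertion\<close>

locale fm_setting =
  fixes n k :: int and mu0 lam0 nu :: "int \<Rightarrow> int" and E0 :: "int \<times> int \<Rightarrow> 'a::linorder"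
  assumes k_ge_1: "1 \<le> k" and k_less_n: "k < n"
    and tableau: "is_tableau n k (mu0, lam0, E0)"
    and cyl_nu: "cyl_partition n k nu"
    and mu0_le_nu: "\<And>m. mu0 m \<le> nu m"
    and nu_le_mu0: "\<And>m. nu (m + 1) \<le> mu0 m"
begin

lemma k_nonzero: "k \<noteq> 0" and k_pos: "0 < k" and n_minus_k_pos: "0 < n - k"
  using k_ge_1 k_less_n by auto

lemma cyl_lam0: "cyl_partition n k lam0" and mu0_le_lam0: "mu0 m \<le> lam0 m"
  using tableau unfolding is_tableau_def by auto

lemma entry_row_mono:
  assumes "mu0 m < a" "a \<le> b" "b \<le> lam0 m"
  shows "entry n k E0 m a \<le> entry n k E0 m b"
  using assms(2,3)
proof (induction b rule: int_ge_induct)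
  case (step i)
  have "in_skew mu0 lam0 (m, i)" "in_skew mu0 lam0 (m, i + 1)"
    using step.hyps step.prems assms(1) unfolding in_skew_def in_shape_def by auto
  then have "entry n k E0 m i \<le> entry n k E0 m (i + 1)"
    using tableau unfolding is_tableau_def entry_def by blast
  then show ?case using step by simp
qed simp

lemma entry_column_strict:
  assumes "mu0 m < c" "mu0 (m + 1) < c" "c \<le> lam0 m" "c \<le> lam0 (m + 1)"
  shows "entry n k E0 m c < entry n k E0 (m + 1) c"
  using tableau assms unfolding is_tableau_def entry_def in_skew_def in_shape_def by auto

text \<open>The frontier F separates, in every row m, the part up to F m that the run has already
  modified from the part beyond it that still carries the entries of the original tableau.\<close>

definition frontier :: "(int \<Rightarrow> int) \<Rightarrow> (int \<Rightarrow> int) \<Rightarrow> (int \<times> int \<Rightarrow> 'a) \<Rightarrow> bool" where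
  "frontier F W E \<longleftrightarrow> (\<forall>m. F (m + k) = F m - (n - k)) \<and> (\<forall>m. F (m + 1) \<le> F m)
     \<and> (\<forall>m. nu m \<le> F m) \<and> (\<forall>m. F m \<le> W m) \<and> (\<forall>m. W m \<le> max (lam0 m) (F m))
     \<and> (\<forall>m y. F m < y \<longrightarrow> y \<le> lam0 m \<longrightarrow> entry n k E m y = entry n k E0 m y)
     \<and> (\<forall>m y z. nu (m + 1) < y \<longrightarrow> y \<le> F (m + 1) \<longrightarrow> y \<le> W (m + 1) \<longrightarrow> F m < z \<longrightarrow> z \<le> lam0 m
            \<longrightarrow> entry n k E (m + 1) y \<le> entry n k E0 m z)"

lemma frontierD:
  assumes "frontier F W E"
  shows "F (m + t * k) = F m - t * (n - k)" and "F (m + 1) \<le> F m"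
    and "nu m \<le> F m" and "F m \<le> W m" and "W m \<le> max (lam0 m) (F m)"
    and "F m < y \<Longrightarrow> y \<le> lam0 m \<Longrightarrow> entry n k E m y = entry n k E0 m y"
    and "nu (m + 1) < y \<Longrightarrow> y \<le> F (m + 1) \<Longrightarrow> y \<le> W (m + 1) \<Longrightarrow> F m < z \<Longrightarrow> z \<le> lam0 m
         \<Longrightarrow> entry n k E (m + 1) y \<le> entry n k E0 m z"
  using assms unfolding frontier_def by (auto intro: periodic_shift)

text \<open>A queue entry (x, s) carries the column c of row s - 1 from which x was bumped.\<close>

definition pending :: "(int \<Rightarrow> int) \<Rightarrow> (int \<Rightarrow> int) \<Rightarrow> (int \<times> int \<Rightarrow> 'a) \<Rightarrow> 'a \<times> int \<times> int \<Rightarrow> bool" where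
  "pending F W E it \<longleftrightarrow> (case it of (x, s, c) \<Rightarrow>
     mu0 (s - 1) < c \<and> c \<le> lam0 (s - 1) \<and> x = entry n k E0 (s - 1) c \<and> F s < c \<and> c \<le> F (s - 1)
     \<and> (\<forall>y. nu s < y \<longrightarrow> y \<le> F s \<longrightarrow> y \<le> W s \<longrightarrow> entry n k E s y \<le> x))"

definition precedes :: "'a \<times> int \<times> int \<Rightarrow> 'a \<times> int \<times> int \<Rightarrow> bool" where
  "precedes a b \<longleftrightarrow> (case a of (x1, s1, c1) \<Rightarrow> case b of (x2, s2, c2) \<Rightarrow>
      \<forall>t. s2 = s1 + t * k \<longrightarrow> c1 < c2 + t * (n - k))"

definition fm_inv :: "'a fm_state \<Rightarrow> bool" where
  "fm_inv st \<longleftrightarrow> (case st of (I, W, E, q, q') \<Rightarrow>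
     I = nu \<and> cyl_partition n k W \<and> (\<forall>m. lam0 m \<le> W m) \<and> (\<forall>m. W (m + 1) \<le> lam0 m)
     \<and> (\<exists>F Q. frontier F W E \<and> map (\<lambda>(x, s, c). (x, s)) Q = q @ q'
             \<and> (\<forall>it\<in>set Q. pending F W E it) \<and> sorted_wrt precedes Q))"

lemma pendingD:
  assumes "pending F W E (x, s, c)"
  shows "mu0 (s - 1) < c" and "c \<le> lam0 (s - 1)" and "x = entry n k E0 (s - 1) c"
    and "F s < c" and "c \<le> F (s - 1)"
    and "nu s < y \<Longrightarrow> y \<le> F s \<Longrightarrow> y \<le> W s \<Longrightarrow> entry n k E s y \<le> x"
  using assms unfolding pending_def by auto

lemma same_row_cases:
  assumes "\<And>t. m = s + t * k \<Longrightarrow> P" and "m mod k \<noteq> s mod k \<Longrightarrow> P"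
  shows P
  using assms mod_eq_ex_mult by blast

definition raise_frontier :: "(int \<Rightarrow> int) \<Rightarrow> int \<Rightarrow> int \<Rightarrow> int \<Rightarrow> int" where
  "raise_frontier F s p m = (if m mod k = s mod k then p - ((m - s) div k) * (n - k) else F m)"

lemma raise_frontier_same_row: "raise_frontier F s p (s + t * k) = p - t * (n - k)"
  using k_nonzero unfolding raise_frontier_def by simp

lemma raise_frontier_other_row: "m mod k \<noteq> s mod k \<Longrightarrow> raise_frontier F s p m = F m"
  unfolding raise_frontier_def by simp

lemma raise_frontier_ge:
  assumes "frontier F W E" "F s < p"
  shows "F m \<le> raise_frontier F s p m"
proof (rule same_row_cases[of m s])
  fix t assume "m = s + t * k"
  then show ?thesis using raise_frontier_same_row frontierD(1)[OF assms(1), of s t] assms(2) by simp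
qed (simp add: raise_frontier_other_row)

lemma raise_frontier_periodic:
  assumes "frontier F W E"
  shows "raise_frontier F s p (m + k) = raise_frontier F s p m - (n - k)"
proof (rule same_row_cases[of m s])
  fix t assume t: "m = s + t * k"
  then have "m + k = s + (t + 1) * k" by (simp add: algebra_simps)
  then show ?thesis
    using t raise_frontier_same_row[of F s p t] raise_frontier_same_row[of F s p "t + 1"]
    by (simp add: algebra_simps)
next
  assume "m mod k \<noteq> s mod k"
  then show ?thesis
    using assms frontierD(1)[of F W E m 1] by (simp add: raise_frontier_other_row)
qed

lemma raise_frontier_antitone:
  assumes F: "frontier F W E" and "F s < p" and "p \<le> F (s - 1)"
  shows "raise_frontier F s p (m + 1) \<le> raise_frontier F s p m"
proof (rule same_row_cases[of "m + 1" s])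
  fix t assume t: "m + 1 = s + t * k"
  show ?thesis
  proof (rule same_row_cases[of m s])
    fix t' assume t': "m = s + t' * k"
    then have "(t - t') * k = 1" using t by (simp add: algebra_simps)
    then have "t' < t" using zero_less_mult_iff[of "t - t'" k] k_pos by simp
    moreover have "raise_frontier F s p (m + 1) = p - t * (n - k)"
      using t raise_frontier_same_row by metis
    moreover have "raise_frontier F s p m = p - t' * (n - k)"
      using t' raise_frontier_same_row by metis
    ultimately show ?thesis using n_minus_k_pos by simp
  next
    assume "m mod k \<noteq> s mod k"
    then have "raise_frontier F s p m = F m" by (rule raise_frontier_other_row)
    moreover have "m = (s - 1) + t * k" using t by simp
    then have "F m = F (s - 1) - t * (n - k)" using frontierD(1)[OF F] by simp
    moreover have "raise_frontier F s p (m + 1) = p - t * (n - k)"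
      using t raise_frontier_same_row by metis
    ultimately show ?thesis using assms(3) by simp
  qed
next
  assume "(m + 1) mod k \<noteq> s mod k"
  then have "raise_frontier F s p (m + 1) = F (m + 1)" by (rule raise_frontier_other_row)
  also have "\<dots> \<le> F m" by (rule frontierD(2)[OF F])
  also have "\<dots> \<le> raise_frontier F s p m" by (rule raise_frontier_ge[OF assms(1,2)])
  finally show ?thesis .
qed

text \<open>In all lemmas of this subsection, the pending value x is written at position p of row s
  (and the frontier of row s is raised to p); the hypothesis \<open>below\<close> says that every entry of
  row s between nu s and p is at most x.\<close>

lemma entry_le_inserted:
  fixes E :: "int \<times> int \<Rightarrow> 'a"
  assumes p: "p \<le> W s + 1"
    and below: "\<forall>y. nu s < y \<longrightarrow> y < p \<longrightarrow> y \<le> W s \<longrightarrow> entry n k E s y \<le> x"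
    and "m mod k = s mod k" and "nu m < y" and "y \<le> raise_frontier F s p m"
  shows "entry n k (E(canon n k (s, p) := x)) m y \<le> x"
proof -
  obtain t where t: "m = s + t * k" using assms(3) by (rule mod_eq_ex_mult)
  define y' where "y' = y + t * (n - k)"
  have y': "nu s < y'" "y' \<le> p"
    using assms(4,5) t cyl_partition_shift[OF cyl_nu] raise_frontier_same_row unfolding y'_def by auto
  have "entry n k (E(canon n k (s, p) := x)) m y = entry n k (E(canon n k (s, p) := x)) s y'"
    using t entry_shift[OF k_nonzero] unfolding y'_def by simp
  also have "\<dots> \<le> x"
    using y' p below entry_upd_same_row[of n k E s p x y'] by auto
  finally show ?thesis .
qed

lemma untouched_after_insert:
  fixes E :: "int \<times> int \<Rightarrow> 'a"
  assumes F: "frontier F W E" and "F s < p"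
    and "raise_frontier F s p m < y" and "y \<le> lam0 m"
  shows "entry n k (E(canon n k (s, p) := x)) m y = entry n k E0 m y"
proof (rule same_row_cases[of m s])
  fix t assume t: "m = s + t * k"
  have "y + t * (n - k) \<noteq> p" using assms(3) t raise_frontier_same_row by auto
  then have "entry n k (E(canon n k (s, p) := x)) m y = entry n k E m y"
    using t entry_shift[OF k_nonzero] entry_upd_same_row by metis
  then show ?thesis using frontierD(6)[OF F] raise_frontier_ge[OF F assms(2), of m] assms(3,4) by simp
next
  assume "m mod k \<noteq> s mod k"
  then show ?thesis
    using entry_upd_other_row frontierD(6)[OF F] assms(3,4) raise_frontier_other_row by metis
qed

lemma column_bound_after_insert:
  assumes F: "frontier F W E" and A: "pending F W E (x, s, c)" and p1: "F s < p" and p: "p \<le> W s + 1"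
    and below: "\<forall>y. nu s < y \<longrightarrow> y < p \<longrightarrow> y \<le> W s \<longrightarrow> entry n k E s y \<le> x"
    and W2: "\<forall>m. m mod k \<noteq> s mod k \<longrightarrow> W2 m = W m"
    and y: "nu (m + 1) < y" "y \<le> raise_frontier F s p (m + 1)" "y \<le> W2 (m + 1)"
    and z: "raise_frontier F s p m < z" "z \<le> lam0 m"
  shows "entry n k (E(canon n k (s, p) := x)) (m + 1) y \<le> entry n k E0 m z"
proof (rule same_row_cases[of "m + 1" s])
  fix t assume t: "m + 1 = s + t * k"
  then have m: "m = (s - 1) + t * k" by simp
  have "entry n k (E(canon n k (s, p) := x)) (m + 1) y \<le> x"
    using entry_le_inserted[where W = W and s = s, OF p below] y t by simp
  also have "x \<le> entry n k E0 (s - 1) (z + t * (n - k))"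
  proof -
    have "F m = F (s - 1) - t * (n - k)" using frontierD(1)[OF F, of "s - 1" t] m by simp
    then have "c \<le> z + t * (n - k)"
      using pendingD(5)[OF A] raise_frontier_ge[OF F p1, of m] z(1) by simp
    moreover have "z + t * (n - k) \<le> lam0 (s - 1)"
      using cyl_partition_shift[OF cyl_lam0, of "s - 1" t] m z(2) by simp
    ultimately show ?thesis using entry_row_mono pendingD(1,3)[OF A] by blast
  qed
  also have "\<dots> = entry n k E0 m z" using entry_shift[OF k_nonzero, of n E0 "s - 1" t z] m by metis
  finally show ?thesis .
next
  assume "(m + 1) mod k \<noteq> s mod k"
  then show ?thesis
    using entry_upd_other_row raise_frontier_other_row W2 y z frontierD(7)[OF F]
      raise_frontier_ge[OF F p1, of m] by (metis order_le_less_trans)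
qed

lemma frontier_after_insert:
  assumes F: "frontier F W E" and A: "pending F W E (x, s, c)"
    and p1: "F s < p" and p2: "p \<le> c" and p3: "p \<le> W s + 1"
    and below: "\<forall>y. nu s < y \<longrightarrow> y < p \<longrightarrow> y \<le> W s \<longrightarrow> entry n k E s y \<le> x"
    and W2: "\<forall>m. m mod k \<noteq> s mod k \<longrightarrow> W2 m = W m"
    and F_W2: "\<forall>m. raise_frontier F s p m \<le> W2 m"
    and W2_F: "\<forall>m. W2 m \<le> max (lam0 m) (raise_frontier F s p m)"
  shows "frontier (raise_frontier F s p) W2 (E(canon n k (s, p) := x))"
  unfolding frontier_def
proof (intro conjI allI impI)
  fix m
  show "raise_frontier F s p (m + k) = raise_frontier F s p m - (n - k)"
    by (rule raise_frontier_periodic[OF F])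
  show "raise_frontier F s p (m + 1) \<le> raise_frontier F s p m"
    using raise_frontier_antitone[OF F p1] p2 pendingD(5)[OF A] by simp
  show "nu m \<le> raise_frontier F s p m"
    using order_trans[OF frontierD(3)[OF F] raise_frontier_ge[OF F p1]] .
  show "raise_frontier F s p m \<le> W2 m" "W2 m \<le> max (lam0 m) (raise_frontier F s p m)"
    using F_W2 W2_F by blast+
next
  fix m y
  assume "raise_frontier F s p m < y" "y \<le> lam0 m"
  then show "entry n k (E(canon n k (s, p) := x)) m y = entry n k E0 m y"
    using untouched_after_insert[OF F p1] by blast
next
  fix m y z
  assume "nu (m + 1) < y" "y \<le> raise_frontier F s p (m + 1)" "y \<le> W2 (m + 1)"
    "raise_frontier F s p m < z" "z \<le> lam0 m"
  then show "entry n k (E(canon n k (s, p) := x)) (m + 1) y \<le> entry n k E0 m z"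
    using column_bound_after_insert[OF F A p1 p3 below W2] by blast
qed

lemma pending_after_insert:
  assumes F: "frontier F W E" and A: "pending F W E (x, s, c)"
    and p1: "F s < p" and p2: "p \<le> c" and p3: "p \<le> W s + 1"
    and below: "\<forall>y. nu s < y \<longrightarrow> y < p \<longrightarrow> y \<le> W s \<longrightarrow> entry n k E s y \<le> x"
    and W2: "\<forall>m. m mod k \<noteq> s mod k \<longrightarrow> W2 m = W m"
    and B: "pending F W E (xb, sb, cb)" and before: "precedes (x, s, c) (xb, sb, cb)"
  shows "pending (raise_frontier F s p) W2 (E(canon n k (s, p) := x)) (xb, sb, cb)"
proof -
  have cb: "cb \<le> raise_frontier F s p (sb - 1)"
    using pendingD(5)[OF B] raise_frontier_ge[OF F p1, of "sb - 1"] by simp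
  show ?thesis
  proof (rule same_row_cases[of sb s])
    fix t assume t: "sb = s + t * k"
    have c_cb: "c < cb + t * (n - k)" using before t unfolding precedes_def by simp
    have sb: "sb - 1 = (s - 1) + t * k" using t by simp
    have "xb = entry n k E0 (s - 1) (cb + t * (n - k))"
      using pendingD(3)[OF B] entry_shift[OF k_nonzero, of n E0 "s - 1" t cb] sb by metis
    moreover have "cb + t * (n - k) \<le> lam0 (s - 1)"
      using pendingD(2)[OF B] cyl_partition_shift[OF cyl_lam0, of "s - 1" t] sb by simp
    ultimately have x_xb: "x \<le> xb"
      using pendingD(1,3)[OF A] c_cb entry_row_mono[of "s - 1" c "cb + t * (n - k)"] by simp
    have same_row: "sb mod k = s mod k" using t by simp
    have "entry n k (E(canon n k (s, p) := x)) sb y \<le> xb"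
      if "nu sb < y" "y \<le> raise_frontier F s p sb" for y
      using entry_le_inserted[where W = W and s = s, OF p3 below same_row that] x_xb by simp
    moreover have "raise_frontier F s p sb < cb" using t c_cb p2 raise_frontier_same_row by simp
    ultimately show ?thesis
      unfolding pending_def using pendingD(1-3)[OF B] cb by simp
  next
    assume other_row: "sb mod k \<noteq> s mod k"
    have "raise_frontier F s p sb = F sb" "W2 sb = W sb"
      "entry n k (E(canon n k (s, p) := x)) sb y = entry n k E sb y" for y
      using other_row W2 by (simp_all add: raise_frontier_other_row entry_upd_other_row)
    then show ?thesis
      unfolding pending_def using pendingD[OF B] cb by simp
  qed
qed

lemma pending_lt_below:
  assumes F: "frontier F W E" and A: "pending F W E (x, s, c)" and "c \<le> W s"
  shows "nu s < c \<and> x < entry n k E s c"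
proof -
  have "nu s < c" using pendingD(4)[OF A] frontierD(3)[OF F] by (meson order_le_less_trans)
  moreover have "c \<le> lam0 s" using assms(3) pendingD(4)[OF A] frontierD(5)[OF F, of s] by linarith
  moreover have "mu0 s < c" using \<open>nu s < c\<close> mu0_le_nu by (meson order_le_less_trans)
  ultimately show ?thesis
    using entry_column_strict[of "s - 1" c] pendingD(1-4)[OF A] frontierD(6)[OF F] by simp
qed

lemma append_shape:
  assumes cW: "cyl_partition n k W" and lam0_W: "\<forall>m. lam0 m \<le> W m" and W_lam0: "\<forall>m. W (m + 1) \<le> lam0 m"
    and "W s < c" and "c \<le> lam0 (s - 1)"
    and W2_def: "W2 = (\<lambda>m. if m mod k = s mod k then W m + 1 else W m)"
  shows "cyl_partition n k W2 \<and> (\<forall>m. lam0 m \<le> W2 m) \<and> (\<forall>m. W2 (m + 1) \<le> lam0 m)"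
proof -
  have W2_lam0: "W2 (m + 1) \<le> lam0 m" for m
  proof (rule same_row_cases[of "m + 1" s])
    fix t assume t: "m + 1 = s + t * k"
    then have "m = (s - 1) + t * k" by simp
    then have "lam0 m = lam0 (s - 1) - t * (n - k)"
      using cyl_partition_shift[OF cyl_lam0, of "s - 1" t] by simp
    moreover have "W2 (m + 1) = W s + 1 - t * (n - k)"
      using t W2_def cyl_partition_shift[OF cW, of s t] by simp
    ultimately show ?thesis using assms(4,5) by simp
  qed (use W2_def W_lam0 in simp)
  have lam0_W2: "\<forall>m. lam0 m \<le> W2 m"
  proof
    fix m show "lam0 m \<le> W2 m" using lam0_W[rule_format, of m] unfolding W2_def by simp
  qed
  have "cyl_partition n k W2"
    unfolding cyl_partition_def
  proof (intro conjI allI)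
    fix m
    show "W2 (m + 1) \<le> W2 m" using order_trans[OF W2_lam0 lam0_W2[rule_format]] .
    have "W m = W (m + k) + (n - k)" using cW unfolding cyl_partition_def by blast
    then show "W2 m = W2 (m + k) + (n - k)" unfolding W2_def by simp
  qed
  then show ?thesis using W2_lam0 lam0_W2 by blast
qed

lemma process_append:
  assumes cW: "cyl_partition n k W" and lam0_W: "\<forall>m. lam0 m \<le> W m" and W_lam0: "\<forall>m. W (m + 1) \<le> lam0 m"
    and F: "frontier F W E" and A: "pending F W E (x, s, c)"
    and all_le: "\<forall>y. nu s < y \<and> y \<le> W s \<longrightarrow> E (canon n k (s, y)) \<le> x"
    and Q: "\<forall>B\<in>set Q. pending F W E B \<and> precedes (x, s, c) B"
    and W2_def: "W2 = (\<lambda>m. if m mod k = s mod k then W m + 1 else W m)"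
    and p_def: "p = W s + 1"
  shows "cyl_partition n k W2 \<and> (\<forall>m. lam0 m \<le> W2 m) \<and> (\<forall>m. W2 (m + 1) \<le> lam0 m)
     \<and> frontier (raise_frontier F s p) W2 (E(canon n k (s, p) := x))
     \<and> (\<forall>B\<in>set Q. pending (raise_frontier F s p) W2 (E(canon n k (s, p) := x)) B)"
proof -
  \<comment> \<open>the new box W s + 1 lies weakly left of the column c <= lam0 (s - 1) that x was bumped from\<close>
  have "W s < c"
  proof (rule ccontr)
    assume "\<not> W s < c"
    then have "nu s < c \<and> x < entry n k E s c" using pending_lt_below[OF F A] by simp
    then show False using all_le[rule_format, of c] \<open>\<not> W s < c\<close> unfolding entry_def by auto
  qed
  then have p_le_c: "p \<le> c" using p_def by simp
  have p1: "F s < p" using frontierD(4)[OF F, of s] p_def by simp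
  have below: "\<forall>y. nu s < y \<longrightarrow> y < p \<longrightarrow> y \<le> W s \<longrightarrow> entry n k E s y \<le> x"
    using all_le unfolding entry_def by blast
  have W2_other: "\<forall>m. m mod k \<noteq> s mod k \<longrightarrow> W2 m = W m" using W2_def by simp
  have raise_W2: "raise_frontier F s p m = W2 m \<or> (raise_frontier F s p m = F m \<and> W2 m = W m)" for m
  proof (rule same_row_cases[of m s])
    fix t assume "m = s + t * k"
    then show ?thesis using W2_def p_def cyl_partition_shift[OF cW] raise_frontier_same_row by simp
  qed (simp add: raise_frontier_other_row W2_other)
  have "raise_frontier F s p m \<le> W2 m" "W2 m \<le> max (lam0 m) (raise_frontier F s p m)" for m
    using raise_W2[of m] frontierD(4,5)[OF F, of m] by auto
  then have "frontier (raise_frontier F s p) W2 (E(canon n k (s, p) := x))"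
    using frontier_after_insert[OF F A p1 p_le_c _ below W2_other] p_def by simp
  moreover have "\<forall>B\<in>set Q. pending (raise_frontier F s p) W2 (E(canon n k (s, p) := x)) B"
    using Q pending_after_insert[OF F A p1 p_le_c _ below W2_other] p_def by auto
  ultimately show ?thesis
    using append_shape[OF cW lam0_W W_lam0 \<open>W s < c\<close> pendingD(2)[OF A] W2_def] by blast
qed

lemma bump_position:
  assumes F: "frontier F W E" and A: "pending F W E (x, s, c)"
    and not_all: "\<not> (\<forall>y. nu s < y \<and> y \<le> W s \<longrightarrow> E (canon n k (s, y)) \<le> x)"
    and p_def: "p = (LEAST y. nu s < y \<and> y \<le> W s \<and> x < E (canon n k (s, y)))"
  shows "nu s < p" and "p \<le> W s" and "x < entry n k E s p" and "F s < p" and "p \<le> c"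
    and "\<forall>y. nu s < y \<longrightarrow> y < p \<longrightarrow> y \<le> W s \<longrightarrow> entry n k E s y \<le> x"
proof -
  define P where "P y \<longleftrightarrow> nu s < y \<and> y \<le> W s \<and> x < entry n k E s y" for y
  obtain y where "P y" using not_all unfolding P_def entry_def by (auto simp: not_le)
  then have "P p" and p_min: "\<And>z. P z \<Longrightarrow> p \<le> z"
    using int_Least_bounded_below[of P y "nu s"] unfolding p_def P_def entry_def by auto
  then show "nu s < p" "p \<le> W s" and x_less: "x < entry n k E s p" unfolding P_def by auto
  show "\<forall>y. nu s < y \<longrightarrow> y < p \<longrightarrow> y \<le> W s \<longrightarrow> entry n k E s y \<le> x"
    using p_min unfolding P_def by (auto simp: not_less[symmetric])
  show "F s < p"
  proof (rule ccontr)
    assume "\<not> F s < p"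
    then have "entry n k E s p \<le> x" using pendingD(6)[OF A] \<open>P p\<close> unfolding P_def by simp
    then show False using x_less by simp
  qed
  show "p \<le> c"
  proof (cases "c \<le> W s")
    case True
    then have "P c" using pending_lt_below[OF F A] unfolding P_def by simp
    then show ?thesis by (rule p_min)
  next
    case False
    then show ?thesis using \<open>p \<le> W s\<close> by simp
  qed
qed

lemma bumped_pending:
  assumes F: "frontier F W E"
    and p: "nu s < p" "p \<le> W s" "x < entry n k E s p" "F s < p"
    and below: "\<forall>y. nu s < y \<longrightarrow> y < p \<longrightarrow> y \<le> W s \<longrightarrow> entry n k E s y \<le> x"
  shows "pending (raise_frontier F s p) W (E(canon n k (s, p) := x)) (E (canon n k (s, p)), s + 1, p)"
proof -
  have p_lam0: "p \<le> lam0 s" using p(2,4) frontierD(5)[OF F, of s] by linarith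
  have bumped: "E (canon n k (s, p)) = entry n k E0 s p"
    using frontierD(6)[OF F p(4) p_lam0] unfolding entry_def .
  have "raise_frontier F s p (s + 1) < p"
  proof (rule same_row_cases[of "s + 1" s])
    fix t assume t: "s + 1 = s + t * k"
    then have "0 < t" using zero_less_mult_iff[of t k] k_pos by simp
    then show ?thesis using t raise_frontier_same_row[of F s p t] n_minus_k_pos by simp
  next
    assume "(s + 1) mod k \<noteq> s mod k"
    then show ?thesis
      using frontierD(2)[OF F, of s] p(4) by (simp add: raise_frontier_other_row)
  qed
  moreover have "p \<le> raise_frontier F s p s" using raise_frontier_same_row[of F s p 0] by simp
  moreover have "entry n k (E(canon n k (s, p) := x)) (s + 1) y \<le> E (canon n k (s, p))"
    if y: "nu (s + 1) < y" "y \<le> raise_frontier F s p (s + 1)" "y \<le> W (s + 1)" for y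
  proof (rule same_row_cases[of "s + 1" s])
    fix t assume "s + 1 = s + t * k"
    then have "(s + 1) mod k = s mod k" by (metis mod_mult_self1)
    then have "entry n k (E(canon n k (s, p) := x)) (s + 1) y \<le> x"
      using entry_le_inserted[where W = W and s = s, OF _ below] y(1,2) p(2) by simp
    then show ?thesis using p(3) unfolding entry_def by simp
  next
    assume other_row: "(s + 1) mod k \<noteq> s mod k"
    then have "entry n k (E(canon n k (s, p) := x)) (s + 1) y = entry n k E (s + 1) y"
      by (rule entry_upd_other_row)
    also have "\<dots> \<le> entry n k E0 s p"
      using frontierD(7)[OF F y(1) _ y(3) p(4) p_lam0] y(2) other_row
      by (simp add: raise_frontier_other_row)
    finally show ?thesis using bumped by simp
  qed
  moreover have "mu0 s < p" using mu0_le_nu[of s] p(1) by simp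
  ultimately show ?thesis unfolding pending_def using p_lam0 bumped by simp
qed

lemma process_bump:
  assumes cW: "cyl_partition n k W" and F: "frontier F W E" and A: "pending F W E (x, s, c)"
    and not_all: "\<not> (\<forall>y. nu s < y \<and> y \<le> W s \<longrightarrow> E (canon n k (s, y)) \<le> x)"
    and Q: "\<forall>B\<in>set Q. pending F W E B \<and> precedes (x, s, c) B"
    and p_def: "p = (LEAST y. nu s < y \<and> y \<le> W s \<and> x < E (canon n k (s, y)))"
  shows "frontier (raise_frontier F s p) W (E(canon n k (s, p) := x))
     \<and> (\<forall>B\<in>set (Q @ [(E (canon n k (s, p)), s + 1, p)]).
          pending (raise_frontier F s p) W (E(canon n k (s, p) := x)) B)
     \<and> (\<forall>B\<in>set Q. precedes B (E (canon n k (s, p)), s + 1, p))"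
proof -
  note p = bump_position[OF F A not_all p_def]
  have W_unchanged: "\<forall>m. m mod k \<noteq> s mod k \<longrightarrow> W m = W m" by simp
  have "raise_frontier F s p m \<le> W m" for m
  proof (rule same_row_cases[of m s])
    fix t assume "m = s + t * k"
    then show ?thesis using raise_frontier_same_row cyl_partition_shift[OF cW] p(2) by simp
  qed (use frontierD(4)[OF F] in \<open>simp add: raise_frontier_other_row\<close>)
  moreover have "W m \<le> max (lam0 m) (raise_frontier F s p m)" for m
    using frontierD(5)[OF F, of m] raise_frontier_ge[OF F p(4), of m] by linarith
  ultimately have "frontier (raise_frontier F s p) W (E(canon n k (s, p) := x))"
    using frontier_after_insert[OF F A p(4,5) _ p(6) W_unchanged] p(2) by simp
  moreover have "\<forall>B\<in>set Q. pending (raise_frontier F s p) W (E(canon n k (s, p) := x)) B"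
    using Q pending_after_insert[OF F A p(4,5) _ p(6) W_unchanged] p(2) by auto
  moreover have "precedes B (E (canon n k (s, p)), s + 1, p)" if "B \<in> set Q" for B
  proof -
    obtain xb sb cb where B: "B = (xb, sb, cb)" by (cases B)
    have "cb < p + t * (n - k)" if "s + 1 = sb + t * k" for t
    proof -
      have "sb - 1 = s + (- t) * k" using that by simp
      then have "F (sb - 1) = F s + t * (n - k)" using frontierD(1)[OF F, of s "- t"] by simp
      then show ?thesis using pendingD(5) Q \<open>B \<in> set Q\<close> B p(4) by fastforce
    qed
    then show ?thesis unfolding precedes_def B by simp
  qed
  ultimately show ?thesis using bumped_pending[OF F p(1-4,6)] by auto
qed

lemma process_preserves:
  assumes cW: "cyl_partition n k W" and lam0_W: "\<forall>m. lam0 m \<le> W m" and W_lam0: "\<forall>m. W (m + 1) \<le> lam0 m"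
    and F: "frontier F W E" and A: "pending F W E (x, s, c)"
    and Q: "\<forall>B\<in>set Q. pending F W E B \<and> precedes (x, s, c) B" and sorted: "sorted_wrt precedes Q"
    and process: "fm_process n k nu W E x s = (W', E', new)"
  shows "cyl_partition n k W' \<and> (\<forall>m. lam0 m \<le> W' m) \<and> (\<forall>m. W' (m + 1) \<le> lam0 m)
    \<and> (\<exists>F' Q'. frontier F' W' E' \<and> map (\<lambda>(x, s, c). (x, s)) Q' = map (\<lambda>(x, s, c). (x, s)) Q @ new
              \<and> (\<forall>it\<in>set Q'. pending F' W' E' it) \<and> sorted_wrt precedes Q')"
proof (cases "\<forall>y. nu s < y \<and> y \<le> W s \<longrightarrow> E (canon n k (s, y)) \<le> x")
  case True
  define p where "p = W s + 1"
  have "W' = (\<lambda>m. if m mod k = s mod k then W m + 1 else W m)" "E' = E(canon n k (s, p) := x)" "new = []"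
    using process True unfolding fm_process_def p_def by auto
  then show ?thesis
    using process_append[OF cW lam0_W W_lam0 F A True Q _ p_def] sorted by auto
next
  case False
  define p where "p = (LEAST y. nu s < y \<and> y \<le> W s \<and> x < E (canon n k (s, y)))"
  have "W' = W" "E' = E(canon n k (s, p) := x)" "new = [(E (canon n k (s, p)), s + 1)]"
    using process False unfolding fm_process_def p_def Let_def by auto
  moreover have "sorted_wrt precedes (Q @ [(E (canon n k (s, p)), s + 1, p)])"
    using sorted process_bump[OF cW F A False Q p_def] by (simp add: sorted_wrt_append)
  ultimately show ?thesis
    using process_bump[OF cW F A False Q p_def] cW lam0_W W_lam0
    by (intro conjI exI[of _ "raise_frontier F s p"] exI[of _ "Q @ [(E (canon n k (s, p)), s + 1, p)]"]) auto
qed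

lemma fm_inv_step:
  assumes "fm_inv st"
  shows "fm_inv (fm_step n k st)"
proof -
  obtain W E q q' where st: "st = (nu, W, E, q, q')"
    using assms unfolding fm_inv_def by (cases st) auto
  have shape: "cyl_partition n k W" "\<forall>m. lam0 m \<le> W m" "\<forall>m. W (m + 1) \<le> lam0 m"
    using assms st unfolding fm_inv_def by auto
  obtain F Q where F: "frontier F W E" and mQ: "map (\<lambda>(x, s, c). (x, s)) Q = q @ q'"
    and pend: "\<forall>it\<in>set Q. pending F W E it" and sorted: "sorted_wrt precedes Q"
    using assms st unfolding fm_inv_def by auto
  show ?thesis
  proof (cases q)
    case Nil
    then show ?thesis using assms st unfolding fm_inv_def fm_step_def by simp
  next
    case (Cons a rest)
    obtain x s c Q0 where Q: "Q = (x, s, c) # Q0" and a: "a = (x, s)"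
      and mQ0: "map (\<lambda>(x, s, c). (x, s)) Q0 = rest @ q'"
      using mQ Cons by (cases Q) auto
    obtain W' E' new where process: "fm_process n k nu W E x s = (W', E', new)"
      by (metis prod_cases3)
    have "fm_step n k st = (nu, W', E', rest, q' @ new)"
      using st Cons a process unfolding fm_step_def by simp
    then show ?thesis
      using process_preserves[OF shape F _ _ _ process, of c Q0] pend sorted Q mQ0
      unfolding fm_inv_def by simp
  qed
qed

lemma fm_inv_iterate: "fm_inv st \<Longrightarrow> fm_inv ((fm_step n k ^^ i) st)"
  by (induction i) (auto intro: fm_inv_step)

definition row_queue :: "(int \<times> int) set \<Rightarrow> int \<Rightarrow> ('a \<times> int \<times> int) list" where
  "row_queue S h = map (\<lambda>y. (E0 (canon n k (h, y)), h + 1, y))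
     (sorted_list_of_set {y. canon n k (h, y) \<in> S \<and> y \<le> lam0 h})"

lemma sorted_row_queue: "sorted_wrt precedes (row_queue S h)"
  unfolding row_queue_def sorted_wrt_map
proof (rule sorted_wrt_mono_rel[of _ "(<)"])
  fix y1 y2 :: int assume "y1 < y2"
  then show "precedes (E0 (canon n k (h, y1)), h + 1, y1) (E0 (canon n k (h, y2)), h + 1, y2)"
    unfolding precedes_def using k_nonzero by simp
qed (rule strict_sorted_list_of_set)

lemma sorted_concat_row_queue:
  "sorted_wrt (<) hs \<Longrightarrow> set hs \<subseteq> {r0..r0 + k - 1} \<Longrightarrow> sorted_wrt precedes (concat (map (row_queue S) hs))"
proof (induction hs)
  case (Cons h hs)
  have "precedes a b" if a: "a \<in> set (row_queue S h)" and b: "b \<in> set (concat (map (row_queue S) hs))" for a b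
  proof -
    obtain h' where h': "h' \<in> set hs" "b \<in> set (row_queue S h')" using b by auto
    obtain y1 y2 where "a = (E0 (canon n k (h, y1)), h + 1, y1)" "b = (E0 (canon n k (h', y2)), h' + 1, y2)"
      using a h'(2) unfolding row_queue_def by (auto simp del: set_sorted_list_of_set)
    moreover have hh: "h < h'" "r0 \<le> h" "h' \<le> r0 + k - 1" using Cons.prems h'(1) by auto
    moreover have "h' \<noteq> h + t * k" for t
    proof
      assume "h' = h + t * k"
      then have "0 < t * k" "t * k < 1 * k" using hh by linarith+
      then have "0 < t" "t < 1"
        using k_pos zero_less_mult_iff[of t k] mult_right_less_imp_less[of t k 1] by auto
      then show False by simp
    qed
    ultimately show ?thesis unfolding precedes_def by simp
  qed
  then show ?case using Cons sorted_row_queue by (simp add: sorted_wrt_append)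
qed simp

lemma row_queue_pending:
  assumes S_boxes: "\<And>h y. canon n k (h, y) \<in> S \<longleftrightarrow> mu0 h < y \<and> y \<le> nu h"
    and "it \<in> set (row_queue S h)"
  shows "pending nu W E0 it"
proof -
  obtain y where it: "it = (E0 (canon n k (h, y)), h + 1, y)"
    and y: "y \<in> set (sorted_list_of_set {y. canon n k (h, y) \<in> S \<and> y \<le> lam0 h})"
    using assms(2) unfolding row_queue_def by (auto simp del: set_sorted_list_of_set)
  moreover have "finite {y. canon n k (h, y) \<in> S \<and> y \<le> lam0 h}"
    by (rule finite_subset[of _ "{mu0 h<..lam0 h}"]) (auto simp: S_boxes)
  ultimately have "mu0 h < y" "y \<le> nu h" "y \<le> lam0 h" using S_boxes by auto
  moreover have "nu (h + 1) < y" using nu_le_mu0[of h] \<open>mu0 h < y\<close> by simp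
  ultimately show ?thesis unfolding pending_def it entry_def by simp
qed

lemma fm_init_eq:
  assumes "adds_to n k mu0 S nu"
  shows "fm_init n k (mu0, lam0, E0) S r0 = (nu, \<lambda>m. max (lam0 m) (nu m), E0,
           map (\<lambda>(x, s, c). (x, s)) (concat (map (row_queue S) [r0..r0 + k - 1])), [])"
proof -
  have "(THE nu'. adds_to n k mu0 S nu') = nu"
    by (rule the_equality[where P = "adds_to n k mu0 S", OF assms]) (rule adds_to_unique[OF assms])
  then show ?thesis
    unfolding fm_init_def Let_def prod.case row_queue_def by (simp add: map_concat comp_def)
qed

lemma initial_frontier:
  defines "W \<equiv> \<lambda>m. max (lam0 m) (nu m)"
  shows "cyl_partition n k W" and "\<forall>m. lam0 m \<le> W m" and "\<forall>m. W (m + 1) \<le> lam0 m"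
    and "frontier nu W E0"
proof -
  have lam0_periodic: "lam0 (m + k) = lam0 m - (n - k)" and nu_periodic: "nu (m + k) = nu m - (n - k)" for m
    using cyl_partition_shift[OF cyl_lam0, of m 1] cyl_partition_shift[OF cyl_nu, of m 1] by simp_all
  have lam0_anti: "lam0 (m + 1) \<le> lam0 m" and nu_anti: "nu (m + 1) \<le> nu m" for m
    using cyl_lam0 cyl_nu unfolding cyl_partition_def by blast+
  show "cyl_partition n k W"
    unfolding cyl_partition_def W_def
    using max.mono[OF lam0_anti nu_anti] lam0_periodic nu_periodic by (simp add: max_def)
  show "\<forall>m. lam0 m \<le> W m" unfolding W_def by simp
  show "\<forall>m. W (m + 1) \<le> lam0 m"
    unfolding W_def using lam0_anti order_trans[OF nu_le_mu0 mu0_le_lam0] by simp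
  show "frontier nu W E0"
    unfolding frontier_def W_def using nu_periodic nu_anti by simp
qed

lemma fm_inv_init:
  assumes "adds_to n k mu0 S nu"
    and "\<And>h y. canon n k (h, y) \<in> S \<longleftrightarrow> mu0 h < y \<and> y \<le> nu h"
  shows "fm_inv (fm_init n k (mu0, lam0, E0) S r0)"
proof -
  define Q where "Q = concat (map (row_queue S) [r0..r0 + k - 1])"
  have "\<forall>it\<in>set Q. pending nu (\<lambda>m. max (lam0 m) (nu m)) E0 it"
    unfolding Q_def using row_queue_pending[OF assms(2)] by auto
  moreover have "sorted_wrt precedes Q" unfolding Q_def by (rule sorted_concat_row_queue) auto
  ultimately show ?thesis
    unfolding fm_inv_def fm_init_eq[OF assms(1)] Q_def[symmetric] using initial_frontier by blast
qed

end

theorem mainTheorem15: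
  fixes n k r0 :: int and R :: "('a::linorder) tableau" and S :: "(int \<times> int) set"
    and F :: "'a fm_state"
  assumes "1 \<le> k" and "k < n"
    and "is_tableau n k R"
    and "fm_input n k R S"
    and "fm_final n k R S r0 F"
  shows "horizontal_strip n k (fm_new_set k R F)"
proof -
  obtain mu0 lam0 E0 where R: "R = (mu0, lam0, E0)" by (cases R)
  have tableau: "is_tableau n k (mu0, lam0, E0)" using assms(3) R by simp
  then have cyl: "cyl_partition n k mu0" "cyl_partition n k lam0" unfolding is_tableau_def by auto
  obtain nu where adds: "adds_to n k mu0 S nu" and strip: "horizontal_strip n k S"
    and S_outside: "\<forall>p. canon n k p \<in> S \<longrightarrow> \<not> in_shape mu0 p"
    using assms(4) R unfolding fm_input_def by auto
  note S_boxes = adds_to_boxes[OF S_outside adds]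
  have cyl_nu: "cyl_partition n k nu" using adds unfolding adds_to_def by simp
  interpret fm_setting n k mu0 lam0 nu E0
    using assms(1,2) tableau cyl_nu adds_to_le[OF adds]
      horizontal_strip_adds_to[OF assms(2) strip cyl(1) cyl_nu S_boxes]
    by unfold_locales auto
  obtain i where "F = (fm_step n k ^^ i) (fm_init n k R S r0)"
    using assms(5) unfolding fm_final_def by blast
  then have "fm_inv F" using fm_inv_iterate fm_inv_init[OF adds S_boxes] R by simp
  then obtain W where "fst (snd F) = W" and "cyl_partition n k W"
    and "\<forall>m. lam0 m \<le> W m" and "\<forall>m. W (m + 1) \<le> lam0 m"
    unfolding fm_inv_def by (auto split: prod.splits)
  then show ?thesis
    unfolding fm_new_set_def R using horizontal_strip_skew_boxes[OF assms(1) cyl(2)] by simp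
qed

end
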